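(* Let $K, M, N, d$ be positive integers, $\sigma^2>0$, $P>0$, weights $\omega_1,\ldots,\omega_K>0$, and channel matrices $\boldsymbol{H}_k\in\mathbb{C}^{N\times M}$. For $\boldsymbol{V}=(\boldsymbol{V}_1,\ldots,\boldsymbol{V}_K)$, $\boldsymbol{V}_k\in\mathbb{C}^{M\times d}$, define $$f(\boldsymbol{V})=\sum_{k=1}^K\omega_k\log\left|\boldsymbol{I}+\boldsymbol{V}_k^{\mathrm{H}}\boldsymbol{H}_k^{\mathrm{H}}\boldsymbol{F}_k^{-1}\boldsymbol{H}_k\boldsymbol{V}_k\right|,\quad \boldsymbol{F}_k=\sigma^2\boldsymbol{I}+\sum_{j\ne k}\boldsymbol{H}_k\boldsymbol{V}_j\boldsymbol{V}_j^{\mathrm{H}}\boldsymbol{H}_k^{\mathrm{H}},$$ and, for $\sum_k\|\boldsymbol{V}_k\|_F^2>0$, $$g(\boldsymbol{V})=\sum_{k=1}^K\omega_k\log\left|\boldsymbol{I}+\boldsymbol{V}_k^{\mathrm{H}}\boldsymbol{H}_k^{\mathrm{H}}\widetilde{\boldsymbol{F}}_k^{-1}\boldsymbol{H}_k\boldsymbol{V}_k\right|,\quad \widetilde{\boldsymbol{F}}_k=\Big(\frac{\sigma^2}{P}\sum_{j=1}^K\|\boldsymbol{V}_j\|_F^2\Big)\boldsymbol{I}+\sum_{j\ne k}\boldsymbol{H}_k\boldsymbol{V}_j\boldsymbol{V}_j^{\mathrm{H}}\boldsymbol{H}_k^{\mathrm{H}}.$$ Consider the unconstrained problem $\max_{\boldsymbol{V}}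 g(\boldsymbol{V})$ and the constrained problem $\max_{\boldsymbol{V}} f(\boldsymbol{V})$ subject to $\sum_{k=1}^K\|\boldsymbol{V}_k\|_F^2\le P$. Then for any $\boldsymbol{V}$ with $\sum_{k=1}^K\|\boldsymbol{V}_k\|_F^2>0$, $\boldsymbol{V}$ is a stationary point of the unconstrained problem if and only if $\rho\boldsymbol{V}$ is a stationary point of the constrained problem, where $\rho=\big(P/\sum_{k=1}^K\|\boldsymbol{V}_k\|_F^2\big)^{1/2}$.
   Context: $|\cdot|$ denotes determinant, $\|\cdot\|_F$ Frobenius norm. A stationary point of the unconstrained problem is a point where $\nabla g=\boldsymbol{0}$; a stationary point of the constrained problem is a feasible point satisfying the KKT conditions. Gradients are with respect to the complex matrices viewed as real variables. *)

theory Defs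
  imports "HOL-Analysis.Analysis"
begin

definition hadj :: "complex^'n^'m \<Rightarrow> complex^'m^'n" where
  "hadj A = (\<chi> i j. cnj (A $ j $ i))"

definition frob_sq :: "complex^'n^'m \<Rightarrow> real" where
  "frob_sq A = (\<Sum>i\<in>UNIV. \<Sum>j\<in>UNIV. (cmod (A $ i $ j))^2)"

definition total_power :: "complex^'d^'m^'k \<Rightarrow> real" where
  "total_power V = (\<Sum>k\<in>UNIV. frob_sq (V $ k))"

definition Fmat :: "('k \<Rightarrow> complex^'m^'n) \<Rightarrow> complex^'d^'m^'k \<Rightarrow> real \<Rightarrow> 'k \<Rightarrow> complex^'n^'n" where
  "Fmat H V s k = mat (complex_of_real s) +
     (\<Sum>j\<in>UNIV - {k}. H k ** V $ j ** hadj (V $ j) ** hadj (H k))"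

text \<open>log | I + V_k^H H_k^H F^{-1} H_k V_k | (natural log; the determinant is real positive,
  we take its real part).\<close>
definition rate :: "('k \<Rightarrow> complex^'m^'n) \<Rightarrow> complex^'d^'m^'k \<Rightarrow> real \<Rightarrow> 'k \<Rightarrow> real" where
  "rate H V s k = ln (Re (det (mat 1 + hadj (V $ k) ** hadj (H k) **
       matrix_inv (Fmat H V s k) ** H k ** V $ k)))"

definition f_obj :: "('k \<Rightarrow> real) \<Rightarrow> ('k \<Rightarrow> complex^'m^'n) \<Rightarrow> real \<Rightarrow> complex^'d^'m^'k \<Rightarrow> real" where
  "f_obj \<omega> H \<sigma>2 V = (\<Sum>k\<in>UNIV. \<omega> k * rate H V \<sigma>2 k)"

definition g_obj :: "('k \<Rightarrow> real) \<Rightarrow> ('k \<Rightarrow> complex^'m^'n) \<Rightarrow> real \<Rightarrow> real \<Rightarrow> complex^'d^'m^'k \<Rightarrow> real" where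
  "g_obj \<omega> H \<sigma>2 P V = (\<Sum>k\<in>UNIV. \<omega> k * rate H V (\<sigma>2 / P * total_power V) k)"

definition stationary_point :: "('a::real_normed_vector \<Rightarrow> real) \<Rightarrow> 'a \<Rightarrow> bool" where
  "stationary_point g x \<longleftrightarrow> (g has_derivative (\<lambda>h. 0)) (at x)"

definition kkt_point :: "('a::real_normed_vector \<Rightarrow> real) \<Rightarrow> ('a \<Rightarrow> real) \<Rightarrow> 'a \<Rightarrow> bool" where
  "kkt_point f c x \<longleftrightarrow> c x \<le> 0 \<and>
     (\<exists>\<mu> Df Dc. \<mu> \<ge> 0 \<and> (f has_derivative Df) (at x) \<and> (c has_derivative Dc) (at x) \<and>
        (\<forall>h. Df h - \<mu> * Dc h = 0) \<and> \<mu> * c x = 0)"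

end

theory Submission
  imports Defs "HOL-Computational_Algebra.Fundamental_Theorem_Algebra"
begin

(*
  With noise level s, the interference covariance of the scaled precoders a V equals a^2 times that
  of V with noise level s / a^2; hence rate (a V) s = rate V (s / a^2), and g V = f (phi V) for the
  radial projection phi V = sqrt (P / ||V||^2) V onto the sphere ||V||^2 = P. The range of the
  derivative of phi at V is exactly the kernel of the derivative of c = ||.||^2 at phi V, so
  grad g (V) = 0 iff grad f (rho V) vanishes on that tangent space, i.e. iff
  grad f (rho V) = mu grad c (rho V) for some mu. The multiplier is nonnegative because f is
  nondecreasing along rays: enlarging V lowers the effective noise, and each rate decreases in the
  noise since det (A + Y) >= det A for A positive definite and Y positive semidefinite.
*)

section \<open>Positive definite complex matrices\<close>

definition cinner :: "complex^'n \<Rightarrow> complex^'n \<Rightarrow> complex" where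
  "cinner x y = (\<Sum>i\<in>UNIV. cnj (x $ i) * y $ i)"

definition herm_form :: "complex^'n^'n \<Rightarrow> complex^'n \<Rightarrow> complex" where
  "herm_form M x = cinner x (M *v x)"

definition pos_semidef :: "complex^'n^'n \<Rightarrow> bool" where
  "pos_semidef M \<longleftrightarrow> (\<forall>x. Im (herm_form M x) = 0 \<and> 0 \<le> Re (herm_form M x))"

definition pos_def :: "complex^'n^'n \<Rightarrow> bool" where
  "pos_def M \<longleftrightarrow> (\<forall>x. x \<noteq> 0 \<longrightarrow> Im (herm_form M x) = 0 \<and> 0 < Re (herm_form M x))"

lemma cinner_self: "cinner x x = complex_of_real ((norm x)\<^sup>2)"
proof -
  have "cnj z * z = complex_of_real ((cmod z)\<^sup>2)" for z
    by (metis complex_mod_mult_cnj complex_norm_square mult.commute)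
  then show ?thesis
    by (simp add: cinner_def norm_vec_def L2_set_def sum_nonneg)
qed

lemma cinner_commute: "cinner y x = cnj (cinner x y)"
  by (simp add: cinner_def mult.commute)

lemma cinner_add_right: "cinner x (y + z) = cinner x y + cinner x z"
  by (simp add: cinner_def distrib_left sum.distrib)

lemma cinner_scale_right: "cinner x (c *s y) = c * cinner x y"
  by (simp add: cinner_def sum_distrib_left mult_ac)

lemma cinner_zero_right [simp]: "cinner x 0 = 0"
  by (simp add: cinner_def)

lemma hadj_hadj [simp]: "hadj (hadj A) = A"
  by (simp add: hadj_def vec_eq_iff)

lemma hadj_mult: "hadj (A ** B) = hadj B ** hadj A"
  by (simp add: hadj_def matrix_matrix_mult_def vec_eq_iff mult.commute)

lemma hadj_add: "hadj (A + B) = hadj A + hadj B"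
  by (simp add: hadj_def vec_eq_iff)

lemma hadj_sum: "hadj (sum f S) = (\<Sum>j\<in>S. hadj (f j))"
  by (induction S rule: infinite_finite_induct) (auto simp: hadj_def hadj_add vec_eq_iff)

lemma hadj_scaleR: "hadj (c *\<^sub>R A) = c *\<^sub>R hadj A"
  by (simp add: hadj_def vec_eq_iff)

lemma hadj_mat: "hadj (mat c) = mat (cnj c)"
  by (simp add: hadj_def vec_eq_iff mat_def)

lemma cinner_hadj: "cinner x (M *v y) = cinner (hadj M *v x) y"
proof -
  have "cinner x (M *v y) = (\<Sum>i\<in>UNIV. \<Sum>j\<in>UNIV. cnj (x $ i) * M $ i $ j * y $ j)"
    by (simp add: cinner_def matrix_vector_mult_def sum_distrib_left mult_ac)
  also have "\<dots> = (\<Sum>j\<in>UNIV. \<Sum>i\<in>UNIV. cnj (x $ i) * M $ i $ j * y $ j)"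
    by (rule sum.swap)
  also have "\<dots> = cinner (hadj M *v x) y"
    by (simp add: cinner_def matrix_vector_mult_def hadj_def sum_distrib_left mult_ac)
  finally show ?thesis .
qed

lemma herm_form_add: "herm_form (A + B) x = herm_form A x + herm_form B x"
  by (simp add: herm_form_def matrix_vector_mult_add_rdistrib cinner_add_right)

lemma herm_form_zero [simp]: "herm_form 0 x = 0"
  by (simp add: herm_form_def)

lemma herm_form_sum: "herm_form (sum f S) x = (\<Sum>j\<in>S. herm_form (f j) x)"
  by (induction S rule: infinite_finite_induct) (auto simp: herm_form_add)

lemma herm_form_scaleR: "herm_form (c *\<^sub>R A) x = complex_of_real c * herm_form A x"
proof -
  have "(c *\<^sub>R A) *v x = complex_of_real c *s (A *v x)"
    by (simp add: matrix_vector_mult_def vec_eq_iff scaleR_conv_of_real[where 'a=complex]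
        sum_distrib_left mult_ac)
  then show ?thesis by (simp add: herm_form_def cinner_scale_right)
qed

lemma mat_vector_mult: "mat c *v x = c *s x"
  by (simp add: matrix_vector_mult_def mat_def vec_eq_iff if_distrib if_distribR cong: if_cong)

lemma herm_form_mat: "herm_form (mat c) x = c * complex_of_real ((norm x)\<^sup>2)"
  by (simp add: herm_form_def mat_vector_mult cinner_scale_right cinner_self)

lemma herm_form_sandwich: "herm_form (hadj Z ** M ** Z) x = herm_form M (Z *v x)"
  by (simp add: herm_form_def matrix_vector_mul_assoc[symmetric] cinner_hadj)

lemma pos_def_add_pos_semidef: "pos_def A \<Longrightarrow> pos_semidef B \<Longrightarrow> pos_def (A + B)"
  by (simp add: pos_def_def pos_semidef_def herm_form_add add_pos_nonneg)

lemma pos_semidef_sum: "(\<And>j. j \<in> S \<Longrightarrow> pos_semidef (f j)) \<Longrightarrow> pos_semidef (sum f S)"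
  by (simp add: pos_semidef_def herm_form_sum sum_nonneg)

lemma pos_semidef_scaleR: "pos_semidef A \<Longrightarrow> 0 \<le> c \<Longrightarrow> pos_semidef (c *\<^sub>R A)"
  by (simp add: pos_semidef_def herm_form_scaleR)

lemma pos_semidef_mat: "0 \<le> s \<Longrightarrow> pos_semidef (mat (complex_of_real s))"
  by (simp add: pos_semidef_def herm_form_mat)

lemma pos_def_mat: "0 < s \<Longrightarrow> pos_def (mat (complex_of_real s))"
  by (simp add: pos_def_def herm_form_mat)

lemma pos_def_imp_pos_semidef: "pos_def A \<Longrightarrow> pos_semidef A"
  unfolding pos_def_def pos_semidef_def herm_form_def
  by (metis cinner_zero_right less_le matrix_vector_mult_0_right order_refl zero_complex.sel)

lemma pos_semidef_sandwich: "pos_semidef M \<Longrightarrow> pos_semidef (hadj Z ** M ** Z)"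
  by (simp add: pos_semidef_def herm_form_sandwich)

lemma pos_semidef_gram: "pos_semidef (G ** hadj G)"
  using pos_semidef_sandwich[OF pos_semidef_mat[of 1], of "hadj G"] by simp

lemma det_eq_0_imp_kernel:
  fixes M :: "'a::field^'n^'n"
  assumes "det M = 0"
  obtains w where "w \<noteq> 0" "M *v w = 0"
proof -
  have "\<not> inj ((*v) M)"
    using det_nz_iff_inj_gen[OF matrix_vector_mul_linear_gen, of M] assms by simp
  then obtain u v where "u \<noteq> v" "M *v u = M *v v"
    unfolding inj_def by blast
  then show thesis
    by (intro that[of "u - v"]) (simp_all add: matrix_vector_mult_diff_distrib)
qed

lemma pos_def_det_nonzero:
  assumes "pos_def M"
  shows "det M \<noteq> 0"
proof
  assume "det M = 0"
  then obtain w where "w \<noteq> 0" "M *v w = 0"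
    by (rule det_eq_0_imp_kernel)
  then show False
    using assms unfolding pos_def_def herm_form_def by force
qed

lemma pos_def_invertible: "pos_def M \<Longrightarrow> invertible M"
  by (simp add: invertible_det_nz pos_def_det_nonzero)

lemma
  assumes "invertible A"
  shows matrix_inv_right: "A ** matrix_inv A = mat 1"
    and matrix_inv_left: "matrix_inv A ** A = mat 1"
proof -
  have "A ** matrix_inv A = mat 1 \<and> matrix_inv A ** A = mat 1"
    using assms unfolding invertible_def matrix_inv_def by (rule someI_ex)
  then show "A ** matrix_inv A = mat 1" "matrix_inv A ** A = mat 1" by auto
qed

lemma matrix_inv_unique:
  assumes "A ** B = mat 1" "B ** A = mat 1"
  shows "matrix_inv A = B"
proof -
  have "invertible A" using assms unfolding invertible_def by blast
  then have "matrix_inv A = (matrix_inv A ** A) ** B"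
    by (simp add: assms flip: matrix_mul_assoc)
  then show ?thesis by (simp add: matrix_inv_left \<open>invertible A\<close>)
qed

lemma matrix_inv_scaleR:
  fixes A :: "complex^'n^'n"
  assumes "invertible A" "c \<noteq> 0"
  shows "matrix_inv (c *\<^sub>R A) = (1 / c) *\<^sub>R matrix_inv A"
  by (rule matrix_inv_unique)
    (simp_all add: matrix_scalar_ac matrix_inv_right matrix_inv_left assms)

lemma pos_def_matrix_inv:
  assumes pd: "pos_def M"
  shows "pos_def (matrix_inv M)"
  unfolding pos_def_def
proof (intro allI impI)
  fix y :: "complex^'a" assume "y \<noteq> 0"
  define z where "z = matrix_inv M *v y"
  have Mz: "M *v z = y"
    by (simp add: z_def matrix_vector_mul_assoc matrix_inv_right[OF pos_def_invertible[OF pd]])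
  then have "z \<noteq> 0" using \<open>y \<noteq> 0\<close> by auto
  then have q: "Im (herm_form M z) = 0" "0 < Re (herm_form M z)" using pd unfolding pos_def_def by auto
  have "herm_form (matrix_inv M) y = cinner (M *v z) z"
    by (simp add: herm_form_def Mz flip: z_def)
  also have "\<dots> = cnj (herm_form M z)"
    by (simp add: herm_form_def cinner_commute[of z "M *v z"])
  finally have "herm_form (matrix_inv M) y = cnj (herm_form M z)" .
  then show "Im (herm_form (matrix_inv M) y) = 0 \<and> 0 < Re (herm_form (matrix_inv M) y)"
    using q by simp
qed

section \<open>Monotonicity of the determinant\<close>

lemma poly_det: "poly (det (M :: 'a::comm_ring_1 poly^'n^'n)) z = det (\<chi> i j. poly (M $ i $ j) z)"
  unfolding det_def by (simp add: poly_sum poly_prod)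

lemma negative_real_roots_poly_ratio:
  fixes p :: "complex poly"
  assumes roots: "\<And>z. poly p z = 0 \<Longrightarrow> Im z = 0 \<and> Re z < 0"
  shows "\<exists>r\<ge>1. poly p 1 = complex_of_real r * poly p 0"
proof -
  obtain root where decomp: "smult (lead_coeff p) (\<Prod>i<degree p. [:-root i, 1:]) = p"
    using complex_poly_decompose' by blast
  have p: "poly p z = lead_coeff p * (\<Prod>i<degree p. z - root i)" for z
    by (subst decomp[symmetric]) (simp add: poly_prod)
  define a where "a i = Re (root i)" for i
  have root: "root i = complex_of_real (a i)" "a i < 0" if "i < degree p" for i
  proof -
    have "poly p (root i) = 0"
      unfolding p using that by (auto intro!: prod_zero)
    then show "root i = complex_of_real (a i)" "a i < 0"
      using roots by (auto simp: a_def complex_eq_iff)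
  qed
  define r where "r = (\<Prod>i<degree p. (1 - a i) / (- a i))"
  have "1 \<le> r"
    unfolding r_def by (rule prod_ge_1) (use root in \<open>auto simp: field_simps\<close>)
  moreover have "poly p 1 = complex_of_real r * poly p 0"
  proof -
    have "1 - root i = complex_of_real ((1 - a i) / (- a i)) * (0 - root i)" if "i < degree p" for i
      using root[OF that] by (simp add: field_simps)
    then have "(\<Prod>i<degree p. 1 - root i)
        = (\<Prod>i<degree p. complex_of_real ((1 - a i) / (- a i))) * (\<Prod>i<degree p. 0 - root i)"
      by (simp add: prod.distrib[symmetric])
    then show ?thesis
      by (simp add: p r_def)
  qed
  ultimately show ?thesis by blast
qed

(* The roots of z \<mapsto> det (A + z Y) are real and negative: at a root some w \<noteq> 0 satisfies
   w\<^sup>H A w + z w\<^sup>H Y w = 0. *)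
lemma det_add_pos_semidef:
  fixes A Y :: "complex^'n^'n"
  assumes A: "pos_def A" and Y: "pos_semidef Y"
  shows "\<exists>r\<ge>1. det (A + Y) = complex_of_real r * det A"
proof -
  define pencil where "pencil z = (\<chi> i j. A $ i $ j + z * Y $ i $ j)" for z
  define p where "p = det (\<chi> i j. [:A $ i $ j, Y $ i $ j:])"
  have p: "poly p z = det (pencil z)" for z
    by (simp add: p_def pencil_def poly_det)
  have "pencil 0 = A" "pencil 1 = A + Y"
    by (simp_all add: pencil_def vec_eq_iff)
  moreover have "Im z = 0 \<and> Re z < 0" if "poly p z = 0" for z
  proof -
    have "det (pencil z) = 0"
      using that p by simp
    then obtain w where "w \<noteq> 0" "pencil z *v w = 0"
      by (rule det_eq_0_imp_kernel)
    have "pencil z *v w = A *v w + z *s (Y *v w)"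
      by (simp add: pencil_def matrix_vector_mult_def vec_eq_iff sum.distrib sum_distrib_left
          algebra_simps)
    then have "herm_form A w + z * herm_form Y w = cinner w (pencil z *v w)"
      by (simp add: herm_form_def cinner_add_right cinner_scale_right)
    then have "herm_form A w + z * herm_form Y w = 0"
      using \<open>pencil z *v w = 0\<close> by simp
    moreover obtain \<alpha> where \<alpha>: "herm_form A w = complex_of_real \<alpha>" "\<alpha> > 0"
      using A \<open>w \<noteq> 0\<close> unfolding pos_def_def by (metis complex_is_Real_iff of_real_Re)
    moreover obtain \<beta> where \<beta>: "herm_form Y w = complex_of_real \<beta>" "\<beta> \<ge> 0"
      using Y unfolding pos_semidef_def by (metis complex_is_Real_iff of_real_Re)
    ultimately have "\<beta> \<noteq> 0"
      by auto
    with \<open>herm_form A w + z * herm_form Y w = 0\<close> \<alpha> \<beta> have "z = complex_of_real (- \<alpha> / \<beta>)"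
      by (simp add: field_simps add_eq_0_iff)
    then show ?thesis
      using \<alpha> \<beta> \<open>\<beta> \<noteq> 0\<close> by simp
  qed
  ultimately show ?thesis
    using negative_real_roots_poly_ratio[of p] p by metis
qed

section \<open>The rates under changes of noise level and scaling\<close>

lemma mat_of_real_eq_scaleR: "mat (complex_of_real d) = d *\<^sub>R (mat 1 :: complex^'n^'n)"
  by (simp add: vec_eq_iff mat_def scaleR_conv_of_real[where 'a=complex])

lemma matrix_add_rdistrib: "(A + B) ** C = A ** C + B ** (C :: 'a::semiring_1^'n^'m)"
  by (simp add: matrix_matrix_mult_def vec_eq_iff distrib_right sum.distrib)

lemma det_id_add_sandwich_ge_1:
  fixes B :: "complex^'d^'n"
  assumes "pos_semidef M"
  shows "\<exists>r\<ge>1. det (mat 1 + hadj B ** M ** B) = complex_of_real r"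
  using det_add_pos_semidef[OF pos_def_mat[of 1] pos_semidef_sandwich[OF assms]] by simp

lemma matrix_inv_shift:
  fixes F :: "complex^'n^'n"
  assumes "invertible F" "invertible (F + mat (complex_of_real d))"
  shows "matrix_inv F = matrix_inv (F + mat (complex_of_real d))
           + d *\<^sub>R (matrix_inv F ** matrix_inv (F + mat (complex_of_real d)))"
proof -
  let ?G = "F + mat (complex_of_real d)"
  have "matrix_inv F = matrix_inv F ** (?G ** matrix_inv ?G)"
    by (simp add: matrix_inv_right assms)
  also have "\<dots> = (matrix_inv F ** F) ** matrix_inv ?G
      + matrix_inv F ** mat (complex_of_real d) ** matrix_inv ?G"
    by (simp add: matrix_add_ldistrib matrix_add_rdistrib matrix_mul_assoc)
  also have "\<dots> = matrix_inv ?G + d *\<^sub>R (matrix_inv F ** matrix_inv ?G)"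
    by (simp add: matrix_inv_left assms mat_of_real_eq_scaleR matrix_scalar_ac
        scalar_matrix_assoc[symmetric])
  finally show ?thesis .
qed

lemma pos_semidef_inv_mult_inv_shift:
  fixes F :: "complex^'n^'n"
  assumes pd: "pos_def F" and herm: "hadj F = F" and "0 \<le> d"
  shows "pos_semidef (matrix_inv F ** matrix_inv (F + mat (complex_of_real d)))"
  unfolding pos_semidef_def
proof
  fix y :: "complex^'n"
  let ?G = "F + mat (complex_of_real d)"
  have inv: "invertible F" "invertible ?G"
    using pd pos_def_add_pos_semidef pos_semidef_mat \<open>0 \<le> d\<close> by (auto intro: pos_def_invertible)
  define w where "w = matrix_inv ?G *v y"
  define z where "z = matrix_inv F *v w"
  have "y = ?G *v w"
    using inv by (simp add: w_def matrix_vector_mul_assoc matrix_inv_right)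
  then have y: "y = F *v w + complex_of_real d *s w"
    by (simp add: matrix_vector_mult_add_rdistrib mat_vector_mult)
  have w: "w = F *v z"
    using inv by (simp add: z_def matrix_vector_mul_assoc matrix_inv_right)
  have "cinner z (F *v w) = cinner (F *v z) w"
    using cinner_hadj[of z F w] herm by simp
  then have "cinner z y = complex_of_real ((norm w)\<^sup>2) + complex_of_real d * herm_form F z"
    by (simp add: y cinner_add_right cinner_scale_right cinner_self herm_form_def flip: w)
  moreover have "herm_form (matrix_inv F ** matrix_inv ?G) y = cnj (cinner z y)"
    by (simp add: herm_form_def z_def w_def matrix_vector_mul_assoc cinner_commute[of y])
  ultimately show "Im (herm_form (matrix_inv F ** matrix_inv ?G) y) = 0
      \<and> 0 \<le> Re (herm_form (matrix_inv F ** matrix_inv ?G) y)"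
    using pos_def_imp_pos_semidef[OF pd] \<open>0 \<le> d\<close> unfolding pos_semidef_def by simp
qed

lemma det_sandwich_inv_shift:
  fixes F :: "complex^'n^'n" and B :: "complex^'d^'n"
  assumes pd: "pos_def F" and herm: "hadj F = F" and "0 \<le> d"
  defines "G \<equiv> F + mat (complex_of_real d)"
  shows "\<exists>r\<ge>1. det (mat 1 + hadj B ** matrix_inv F ** B)
           = complex_of_real r * det (mat 1 + hadj B ** matrix_inv G ** B)"
proof -
  have "pos_def G"
    unfolding G_def using pd pos_def_add_pos_semidef pos_semidef_mat \<open>0 \<le> d\<close> by blast
  have shift: "matrix_inv F = matrix_inv G + d *\<^sub>R (matrix_inv F ** matrix_inv G)"
    unfolding G_def
    by (rule matrix_inv_shift) (use pd \<open>pos_def G\<close> in \<open>simp_all add: G_def pos_def_invertible\<close>)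
  have "mat 1 + hadj B ** matrix_inv F ** B
      = mat 1 + hadj B ** (matrix_inv G + d *\<^sub>R (matrix_inv F ** matrix_inv G)) ** B"
    by (simp only: shift[symmetric])
  also have "\<dots> = (mat 1 + hadj B ** matrix_inv G ** B)
      + d *\<^sub>R (hadj B ** (matrix_inv F ** matrix_inv G) ** B)"
    by (simp add: matrix_add_ldistrib matrix_add_rdistrib matrix_scalar_ac
        scalar_matrix_assoc[symmetric] add_ac)
  finally have split: "mat 1 + hadj B ** matrix_inv F ** B
      = (mat 1 + hadj B ** matrix_inv G ** B) + d *\<^sub>R (hadj B ** (matrix_inv F ** matrix_inv G) ** B)" .
  have "pos_def (mat 1 + hadj B ** matrix_inv G ** B)"
    using \<open>pos_def G\<close>
    by (intro pos_def_add_pos_semidef pos_def_mat[of 1, simplified] pos_semidef_sandwich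
        pos_def_imp_pos_semidef pos_def_matrix_inv)
  moreover have "pos_semidef (d *\<^sub>R (hadj B ** (matrix_inv F ** matrix_inv G) ** B))"
    unfolding G_def
    by (intro pos_semidef_scaleR pos_semidef_sandwich pos_semidef_inv_mult_inv_shift assms)
  ultimately show ?thesis
    unfolding split by (rule det_add_pos_semidef)
qed

lemma mult_hadj_mult: "A ** B ** hadj B ** hadj A = (A ** B) ** hadj (A ** B)"
  by (simp add: hadj_mult matrix_mul_assoc)

lemma pos_def_Fmat: "0 < s \<Longrightarrow> pos_def (Fmat H V s k)"
  unfolding Fmat_def mult_hadj_mult
  by (intro pos_def_add_pos_semidef pos_def_mat pos_semidef_sum pos_semidef_gram)

lemma hadj_Fmat: "hadj (Fmat H V s k) = Fmat H V s k"
  unfolding Fmat_def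
  by (simp add: hadj_add hadj_sum hadj_mat hadj_mult matrix_mul_assoc)

lemma rate_altdef:
  "rate H V s k = ln (Re (det (mat 1 + hadj (H k ** V $ k) ** matrix_inv (Fmat H V s k) ** (H k ** V $ k))))"
  by (simp add: rate_def hadj_mult matrix_mul_assoc)

lemma rate_antimono:
  assumes "0 < s'" "s' \<le> s"
  shows "rate H V s k \<le> rate H V s' k"
proof -
  define B where "B = H k ** V $ k"
  have F: "Fmat H V s k = Fmat H V s' k + mat (complex_of_real (s - s'))"
    by (simp add: Fmat_def add_ac vec_eq_iff mat_def)
  obtain r where r: "r \<ge> 1" "det (mat 1 + hadj B ** matrix_inv (Fmat H V s' k) ** B)
      = complex_of_real r * det (mat 1 + hadj B ** matrix_inv (Fmat H V s k) ** B)"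
    using det_sandwich_inv_shift[OF pos_def_Fmat[where H=H and V=V and k=k] hadj_Fmat,
        where d = "s - s'" and B = B]
      assms unfolding F by auto
  obtain r' where r': "r' \<ge> 1" "det (mat 1 + hadj B ** matrix_inv (Fmat H V s k) ** B) = complex_of_real r'"
    using det_id_add_sandwich_ge_1[OF pos_def_imp_pos_semidef[OF pos_def_matrix_inv[OF pos_def_Fmat]]]
      assms by (meson less_le_trans)
  have "ln r' \<le> ln (r * r')"
    using r r' by (simp add: mult_le_cancel_right1)
  then show ?thesis
    by (simp add: rate_altdef r r' flip: B_def)
qed

lemma Fmat_scaleR:
  assumes "a \<noteq> 0"
  shows "Fmat H (a *\<^sub>R V) s k = a\<^sup>2 *\<^sub>R Fmat H V (s / a\<^sup>2) k"
proof -
  have "mat (complex_of_real s) = a\<^sup>2 *\<^sub>R (mat (complex_of_real (s / a\<^sup>2)) :: complex^'n^'n)"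
    using assms by (simp only: mat_of_real_eq_scaleR scaleR_scaleR) simp
  moreover have "H k ** (a *\<^sub>R V $ j) ** hadj (a *\<^sub>R V $ j) ** hadj (H k)
      = a\<^sup>2 *\<^sub>R (H k ** V $ j ** hadj (V $ j) ** hadj (H k))" for j
    by (simp add: hadj_scaleR matrix_scalar_ac scalar_matrix_assoc[symmetric] power2_eq_square)
  ultimately show ?thesis
    unfolding Fmat_def by (simp add: scaleR_add_right scaleR_sum_right)
qed

lemma rate_scaleR:
  assumes "a \<noteq> 0" "0 < s"
  shows "rate H (a *\<^sub>R V) s k = rate H V (s / a\<^sup>2) k"
proof -
  have "invertible (Fmat H V (s / a\<^sup>2) k)"
    using assms by (intro pos_def_invertible pos_def_Fmat) simp
  then have "matrix_inv (Fmat H (a *\<^sub>R V) s k) = (1 / a\<^sup>2) *\<^sub>R matrix_inv (Fmat H V (s / a\<^sup>2) k)"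
    using assms by (simp add: Fmat_scaleR matrix_inv_scaleR)
  moreover have "a * a / a\<^sup>2 = 1"
    using assms by (simp add: power2_eq_square)
  ultimately show ?thesis
    unfolding rate_altdef by (simp add: hadj_scaleR matrix_scalar_ac scalar_matrix_assoc[symmetric])
qed

section \<open>Differentiability of the objectives\<close>

definition entrywise_differentiable :: "('x::real_normed_vector \<Rightarrow> complex^'b^'a) \<Rightarrow> 'x \<Rightarrow> bool" where
  "entrywise_differentiable M x \<longleftrightarrow> (\<forall>i j. (\<lambda>y. M y $ i $ j) differentiable (at x))"

lemma entrywise_differentiable_const: "entrywise_differentiable (\<lambda>x. C) x"
  by (simp add: entrywise_differentiable_def)

lemma entrywise_differentiable_add:
  "entrywise_differentiable A x \<Longrightarrow> entrywise_differentiable B x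
    \<Longrightarrow> entrywise_differentiable (\<lambda>y. A y + B y) x"
  by (simp add: entrywise_differentiable_def)

lemma entrywise_differentiable_mult:
  "entrywise_differentiable A x \<Longrightarrow> entrywise_differentiable B x
    \<Longrightarrow> entrywise_differentiable (\<lambda>y. A y ** B y) x"
  by (simp add: entrywise_differentiable_def matrix_matrix_mult_def)

lemma entrywise_differentiable_hadj:
  "entrywise_differentiable A x \<Longrightarrow> entrywise_differentiable (\<lambda>y. hadj (A y)) x"
  by (simp add: entrywise_differentiable_def hadj_def differentiable_cnj_iff)

lemma entrywise_differentiable_sum:
  "(\<And>j. j \<in> S \<Longrightarrow> entrywise_differentiable (A j) x)
    \<Longrightarrow> entrywise_differentiable (\<lambda>y. \<Sum>j\<in>S. A j y) x"
  unfolding entrywise_differentiable_def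
  by (induction S rule: infinite_finite_induct) auto

lemma entrywise_differentiable_vec_nth:
  "entrywise_differentiable (\<lambda>W :: complex^'b^'a^'k. W $ k) x"
proof -
  have "bounded_linear (\<lambda>W :: complex^'b^'a^'k. W $ k $ i $ j)" for i j
    by (intro bounded_linear_compose[OF bounded_linear_vec_nth[of j]]
        bounded_linear_compose[OF bounded_linear_vec_nth[of i]] bounded_linear_vec_nth)
  then show ?thesis
    by (simp add: entrywise_differentiable_def bounded_linear_imp_differentiable)
qed

lemma differentiable_prod:
  fixes f :: "'i \<Rightarrow> 'a::real_normed_vector \<Rightarrow> 'b::real_normed_field"
  assumes "\<And>i. i \<in> I \<Longrightarrow> f i differentiable (at x)"
  shows "(\<lambda>x. \<Prod>i\<in>I. f i x) differentiable (at x)"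
proof -
  from assms obtain D where "\<And>i. i \<in> I \<Longrightarrow> (f i has_derivative D i) (at x)"
    unfolding differentiable_def by metis
  then show ?thesis
    unfolding differentiable_def by (blast intro: has_derivative_prod)
qed

lemma differentiable_det:
  "entrywise_differentiable M x \<Longrightarrow> (\<lambda>y. det (M y)) differentiable (at x)"
  unfolding det_def entrywise_differentiable_def
  by (intro differentiable_sum ballI differentiable_mult differentiable_const differentiable_prod) auto

lemma matrix_inv_cramer:
  fixes A :: "complex^'n^'n"
  assumes "det A \<noteq> 0"
  shows "matrix_inv A $ i $ j = det (\<chi> a b. if b = i then axis j 1 $ a else A $ a $ b) / det A"
proof -
  have "A *v (matrix_inv A *v axis j 1) = axis j 1"
    using assms by (simp add: matrix_vector_mul_assoc matrix_inv_right invertible_det_nz)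
  then have "matrix_inv A *v axis j 1
      = (\<chi> k. det (\<chi> a b. if b = k then axis j 1 $ a else A $ a $ b) / det A)"
    using cramer[OF assms] by blast
  moreover have "(matrix_inv A *v axis j 1) $ i = matrix_inv A $ i $ j"
    by (simp add: matrix_vector_mult_def axis_def if_distrib if_distribR cong: if_cong)
  ultimately show ?thesis by simp
qed

lemma entrywise_differentiable_matrix_inv:
  assumes nz: "\<And>y. det (M y) \<noteq> 0" and M: "entrywise_differentiable M x"
  shows "entrywise_differentiable (\<lambda>y. matrix_inv (M y)) x"
  unfolding entrywise_differentiable_def
proof (intro allI)
  fix i j
  have "entrywise_differentiable (\<lambda>y. \<chi> a b. if b = i then axis j 1 $ a else M y $ a $ b) x"
    unfolding entrywise_differentiable_def
  proof (intro allI)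
    fix a b
    show "(\<lambda>y. (\<chi> a b. if b = i then axis j 1 $ a else M y $ a $ b) $ a $ b) differentiable (at x)"
      using M unfolding entrywise_differentiable_def by (cases "b = i") simp_all
  qed
  then show "(\<lambda>y. matrix_inv (M y) $ i $ j) differentiable (at x)"
    using nz M by (simp add: matrix_inv_cramer differentiable_det)
qed

lemma rate_differentiable:
  fixes H :: "'k::finite \<Rightarrow> complex^'m::finite^'n::finite" and V :: "complex^'d::finite^'m^'k"
  assumes "0 < s"
  shows "(\<lambda>W. rate H W s k) differentiable (at V)"
proof -
  define M where "M X = mat 1 + hadj (X $ k) ** hadj (H k) ** matrix_inv (Fmat H X s k) ** H k ** X $ k"
    for X :: "complex^'d^'m^'k"
  have "entrywise_differentiable M V"
    unfolding M_def Fmat_def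
    by (intro entrywise_differentiable_add entrywise_differentiable_const entrywise_differentiable_mult
        entrywise_differentiable_hadj entrywise_differentiable_vec_nth entrywise_differentiable_sum
        entrywise_differentiable_matrix_inv pos_def_det_nonzero pos_def_Fmat[unfolded Fmat_def] assms)
  then have "(\<lambda>X. Re (det (M X))) differentiable (at V)"
    using differentiable_compose[OF bounded_linear_imp_differentiable[OF bounded_linear_Re]]
      differentiable_det by fastforce
  then obtain D where D: "((\<lambda>X. Re (det (M X))) has_derivative D) (at V)"
    unfolding differentiable_def by blast
  have "0 < Re (det (M V))"
    using det_id_add_sandwich_ge_1[OF pos_def_imp_pos_semidef[OF pos_def_matrix_inv[OF pos_def_Fmat[OF assms]]],
        of "H k ** V $ k" H V k]
    by (auto simp: M_def hadj_mult matrix_mul_assoc)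
  then have "(\<lambda>X. ln (Re (det (M X)))) differentiable (at V)"
    using DERIV_compose_FDERIV[OF DERIV_ln D] unfolding differentiable_def by blast
  then show ?thesis
    by (simp add: rate_def M_def)
qed

lemma f_obj_differentiable: "0 < \<sigma>2 \<Longrightarrow> f_obj \<omega> H \<sigma>2 differentiable (at W)"
  unfolding f_obj_def[abs_def]
  by (intro differentiable_sum ballI differentiable_mult differentiable_const rate_differentiable) auto

section \<open>Stationary points of the radially normalized objective\<close>

lemma linear_functional_factor:
  fixes f l :: "'a::real_vector \<Rightarrow> real"
  assumes "linear f" "linear l" "l x \<noteq> 0" and ker: "\<And>u. l u = 0 \<Longrightarrow> f u = 0"
  shows "f h = f x / l x * l h"
proof -
  have "l (h - (l h / l x) *\<^sub>R x) = 0"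
    using assms by (simp add: linear_diff linear_scale)
  then have "f (h - (l h / l x) *\<^sub>R x) = 0"
    by (rule ker)
  then show ?thesis
    using assms by (simp add: linear_diff linear_scale)
qed

lemma has_derivative_along_ray:
  fixes f :: "'a::real_normed_vector \<Rightarrow> real"
  assumes "(f has_derivative Df) (at x)"
  shows "((\<lambda>u. f (u *\<^sub>R x)) has_real_derivative Df x) (at 1)"
proof -
  have "((\<lambda>u::real. u *\<^sub>R x) has_derivative (\<lambda>d. d *\<^sub>R x)) (at 1)"
    by (auto intro!: derivative_eq_intros)
  then have "((\<lambda>u. f (u *\<^sub>R x)) has_derivative (\<lambda>d. Df (d *\<^sub>R x))) (at 1)"
    using has_derivative_compose assms by fastforce
  moreover have "(\<lambda>d. Df (d *\<^sub>R x)) = (*) (Df x)"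
    using linear_scale[OF has_derivative_linear[OF assms]] by (auto simp: mult.commute)
  ultimately show ?thesis
    by (simp add: has_field_derivative_def)
qed

lemma homogeneous2_derivative_radial:
  fixes c :: "'a::real_normed_vector \<Rightarrow> real"
  assumes "\<And>a. c (a *\<^sub>R x) = a\<^sup>2 * c x" and "(c has_derivative Dc) (at x)"
  shows "Dc x = 2 * c x"
proof -
  have "((\<lambda>u. c (u *\<^sub>R x)) has_real_derivative 2 * c x) (at 1)"
    unfolding assms(1) by (auto intro!: derivative_eq_intros)
  with has_derivative_along_ray[OF assms(2)] show ?thesis
    by (rule DERIV_unique)
qed

lemma ray_nondecreasing_derivative_nonneg:
  fixes f :: "'a::real_normed_vector \<Rightarrow> real"
  assumes "(f has_derivative Df) (at x)" and "\<And>u. 1 \<le> u \<Longrightarrow> f x \<le> f (u *\<^sub>R x)"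
  shows "0 \<le> Df x"
proof (rule ccontr)
  assume "\<not> 0 \<le> Df x"
  then obtain d where "d > 0" and "\<And>h. 0 < h \<Longrightarrow> h < d \<Longrightarrow> f (1 *\<^sub>R x) > f ((1 + h) *\<^sub>R x)"
    using DERIV_neg_dec_right[OF has_derivative_along_ray[OF assms(1)]] by force
  then have "f x > f ((1 + d / 2) *\<^sub>R x)"
    by simp
  with assms(2)[of "1 + d / 2"] \<open>d > 0\<close> show False
    by simp
qed

lemma open_Collect_pos_differentiable:
  fixes c :: "'a::real_normed_vector \<Rightarrow> real"
  assumes "\<And>x. c differentiable (at x)"
  shows "open {x. 0 < c x}"
  using assms
  by (intro open_Collect_less continuous_on_const continuous_at_imp_continuous_on ballI
      differentiable_imp_continuous_within)

lemma has_derivative_normalization: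
  fixes c :: "'a::real_normed_vector \<Rightarrow> real"
  assumes "\<And>x. c differentiable (at x)" and "0 < P" "0 < c V"
  obtains r where
    "((\<lambda>W. sqrt (P / c W) *\<^sub>R W) has_derivative (\<lambda>h. sqrt (P / c V) *\<^sub>R h + r h *\<^sub>R V)) (at V)"
proof -
  obtain Dc where "(c has_derivative Dc) (at V)"
    using assms(1) unfolding differentiable_def by blast
  then obtain r where "((\<lambda>W. sqrt (P / c W)) has_derivative r) (at V)"
    using has_derivative_real_sqrt[OF _ has_derivative_divide[OF has_derivative_const]] assms(2,3)
    by (metis divide_pos_pos less_irrefl)
  from has_derivative_scaleR[OF this has_derivative_ident] show thesis
    by (intro that) simp
qed

(* c is constant along the normalization, so the range of D\<phi> lies in ker Dc; conversely
   D\<phi> h = \<rho> h + r h V with Dc V \<noteq> 0, which forces D\<phi> (u / \<rho>) = u for u \<in> ker Dc. *)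
lemma normalization_derivative:
  fixes c :: "'a::real_normed_vector \<Rightarrow> real"
  assumes c_scaleR: "\<And>a x. c (a *\<^sub>R x) = a\<^sup>2 * c x" and c_diff: "\<And>x. c differentiable (at x)"
    and "0 < P" "0 < c V"
    and Dc: "(c has_derivative Dc) (at (sqrt (P / c V) *\<^sub>R V))"
  obtains D\<phi> where "((\<lambda>W. sqrt (P / c W) *\<^sub>R W) has_derivative D\<phi>) (at V)"
    and "range D\<phi> = {u. Dc u = 0}"
proof -
  define \<rho> where "\<rho> = sqrt (P / c V)"
  have "0 < \<rho>"
    using assms by (simp add: \<rho>_def)
  obtain r where r: "((\<lambda>W. sqrt (P / c W) *\<^sub>R W) has_derivative (\<lambda>h. \<rho> *\<^sub>R h + r h *\<^sub>R V)) (at V)"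
    using has_derivative_normalization[OF c_diff \<open>0 < P\<close> \<open>0 < c V\<close>] unfolding \<rho>_def by blast
  define D\<phi> where "D\<phi> h = \<rho> *\<^sub>R h + r h *\<^sub>R V" for h
  have D\<phi>: "((\<lambda>W. sqrt (P / c W) *\<^sub>R W) has_derivative D\<phi>) (at V)"
    using r unfolding D\<phi>_def[abs_def] .
  have "((\<lambda>W. c (sqrt (P / c W) *\<^sub>R W)) has_derivative (\<lambda>h. Dc (D\<phi> h))) (at V)"
    using has_derivative_compose[OF D\<phi>] Dc by fastforce
  moreover have "((\<lambda>W. c (sqrt (P / c W) *\<^sub>R W)) has_derivative (\<lambda>h. 0)) (at V)"
    by (rule has_derivative_transform_within_open[OF has_derivative_const[of P]
          open_Collect_pos_differentiable[OF c_diff]]) (use assms in \<open>simp_all add: c_scaleR\<close>)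
  ultimately have tangent: "Dc (D\<phi> h) = 0" for h
    by (metis has_derivative_unique)
  have lin: "linear Dc"
    using Dc by (rule has_derivative_linear)
  have "Dc (\<rho> *\<^sub>R V) = 2 * P"
    using homogeneous2_derivative_radial[OF c_scaleR Dc] assms by (simp add: c_scaleR \<rho>_def)
  then have "Dc V \<noteq> 0"
    using \<open>0 < P\<close> by (auto simp: linear_scale[OF lin])
  have "u \<in> range D\<phi>" if "Dc u = 0" for u
  proof -
    have "D\<phi> (u /\<^sub>R \<rho>) = u + r (u /\<^sub>R \<rho>) *\<^sub>R V"
      using \<open>0 < \<rho>\<close> by (simp add: D\<phi>_def)
    moreover have "r (u /\<^sub>R \<rho>) * Dc V = 0"
      using tangent[of "u /\<^sub>R \<rho>"] that by (simp add: calculation linear_add[OF lin] linear_scale[OF lin])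
    ultimately have "D\<phi> (u /\<^sub>R \<rho>) = u"
      using \<open>Dc V \<noteq> 0\<close> by simp
    then show ?thesis
      by (metis rangeI)
  qed
  with tangent have "range D\<phi> = {u. Dc u = 0}"
    by auto
  with D\<phi> show thesis
    by (rule that)
qed

lemma kkt_point_active_iff_tangent:
  fixes f c :: "'a::real_normed_vector \<Rightarrow> real"
  assumes Df: "(f has_derivative Df) (at x)" and Dc: "(c has_derivative Dc) (at x)"
    and "c x = P" and "0 < Dc x" and f_ray: "\<And>u. 1 \<le> u \<Longrightarrow> f x \<le> f (u *\<^sub>R x)"
  shows "kkt_point f (\<lambda>W. c W - P) x \<longleftrightarrow> (\<forall>u. Dc u = 0 \<longrightarrow> Df u = 0)"
proof -
  have Dc_constraint: "((\<lambda>W. c W - P) has_derivative Dc) (at x)"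
    using has_derivative_diff[OF Dc has_derivative_const] by simp
  show ?thesis
  proof
    assume "kkt_point f (\<lambda>W. c W - P) x"
    then obtain \<mu> Df' Dc' where "(f has_derivative Df') (at x)"
      and "((\<lambda>W. c W - P) has_derivative Dc') (at x)" and "\<forall>h. Df' h - \<mu> * Dc' h = 0"
      unfolding kkt_point_def by blast
    then have "Df h = \<mu> * Dc h" for h
      using has_derivative_unique Df Dc_constraint by (metis eq_iff_diff_eq_0)
    then show "\<forall>u. Dc u = 0 \<longrightarrow> Df u = 0"
      by simp
  next
    assume ker: "\<forall>u. Dc u = 0 \<longrightarrow> Df u = 0"
    define \<mu> where "\<mu> = Df x / Dc x"
    have "Df h = \<mu> * Dc h" for h
      unfolding \<mu>_def using \<open>0 < Dc x\<close> ker
      by (intro linear_functional_factor has_derivative_linear[OF Df] has_derivative_linear[OF Dc]) auto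
    moreover have "0 \<le> \<mu>"
      using ray_nondecreasing_derivative_nonneg[OF Df f_ray] \<open>0 < Dc x\<close> by (simp add: \<mu>_def)
    ultimately show "kkt_point f (\<lambda>W. c W - P) x"
      unfolding kkt_point_def using \<open>c x = P\<close> Df Dc_constraint by auto
  qed
qed

lemma stationary_normalized_iff_kkt:
  fixes c f g :: "'a::real_normed_vector \<Rightarrow> real"
  assumes c_scaleR: "\<And>a x. c (a *\<^sub>R x) = a\<^sup>2 * c x" and c_diff: "\<And>x. c differentiable (at x)"
    and "0 < P" "0 < c V"
    and g: "\<And>W. 0 < c W \<Longrightarrow> g W = f (sqrt (P / c W) *\<^sub>R W)"
    and f_diff: "f differentiable (at (sqrt (P / c V) *\<^sub>R V))"
    and f_ray: "\<And>u. 1 \<le> u \<Longrightarrow> f (sqrt (P / c V) *\<^sub>R V) \<le> f (u *\<^sub>R sqrt (P / c V) *\<^sub>R V)"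
  shows "stationary_point g V \<longleftrightarrow> kkt_point f (\<lambda>W. c W - P) (sqrt (P / c V) *\<^sub>R V)"
proof -
  define x where "x = sqrt (P / c V) *\<^sub>R V"
  have "c x = P"
    using assms by (simp add: x_def c_scaleR)
  obtain Dc where Dc: "(c has_derivative Dc) (at x)"
    using c_diff unfolding differentiable_def by blast
  have "Dc x = 2 * P"
    using homogeneous2_derivative_radial[OF c_scaleR Dc] \<open>c x = P\<close> by simp
  obtain D\<phi> where D\<phi>: "((\<lambda>W. sqrt (P / c W) *\<^sub>R W) has_derivative D\<phi>) (at V)"
    and range: "range D\<phi> = {u. Dc u = 0}"
    using normalization_derivative[OF c_scaleR c_diff \<open>0 < P\<close> \<open>0 < c V\<close>] Dc x_def by blast
  obtain Df where Df: "(f has_derivative Df) (at x)"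
    using f_diff unfolding differentiable_def x_def by blast
  have "((\<lambda>W. f (sqrt (P / c W) *\<^sub>R W)) has_derivative (\<lambda>h. Df (D\<phi> h))) (at V)"
    using has_derivative_compose[OF D\<phi>, of f Df] Df by (simp add: x_def)
  then have g_deriv: "(g has_derivative (\<lambda>h. Df (D\<phi> h))) (at V)"
    by (rule has_derivative_transform_within_open[OF _ open_Collect_pos_differentiable[OF c_diff]])
      (use \<open>0 < c V\<close> in \<open>simp_all add: g\<close>)
  have "stationary_point g V \<longleftrightarrow> (\<lambda>h. Df (D\<phi> h)) = (\<lambda>h. 0)"
    unfolding stationary_point_def using g_deriv has_derivative_unique by metis
  also have "\<dots> \<longleftrightarrow> (\<forall>u\<in>range D\<phi>. Df u = 0)"
    by (simp add: fun_eq_iff)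
  also have "\<dots> \<longleftrightarrow> (\<forall>u. Dc u = 0 \<longrightarrow> Df u = 0)"
    by (simp add: range)
  also have "\<dots> \<longleftrightarrow> kkt_point f (\<lambda>W. c W - P) x"
    using kkt_point_active_iff_tangent[OF Df Dc \<open>c x = P\<close>] \<open>Dc x = 2 * P\<close> \<open>0 < P\<close> f_ray
    by (simp add: x_def)
  finally show ?thesis
    unfolding x_def .
qed

section \<open>The beamforming problems\<close>

lemma frob_sq_eq_norm: "frob_sq A = (norm A)\<^sup>2"
  by (simp add: frob_sq_def norm_vec_def L2_set_def sum_nonneg)

lemma total_power_eq_norm: "total_power W = (norm W)\<^sup>2"
  by (simp add: total_power_def frob_sq_eq_norm norm_vec_def L2_set_def sum_nonneg)

lemma total_power_scaleR: "total_power (a *\<^sub>R W) = a\<^sup>2 * total_power W"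
  by (simp add: total_power_eq_norm power_mult_distrib)

lemma total_power_differentiable: "total_power differentiable (at W)"
  unfolding total_power_eq_norm[abs_def] power2_norm_eq_inner by simp

lemma g_obj_eq_f_obj_normalized:
  assumes "0 < \<sigma>2" "0 < P" "0 < total_power W"
  shows "g_obj \<omega> H \<sigma>2 P W = f_obj \<omega> H \<sigma>2 (sqrt (P / total_power W) *\<^sub>R W)"
proof -
  have "\<sigma>2 / (sqrt (P / total_power W))\<^sup>2 = \<sigma>2 / P * total_power W"
    using assms by simp
  then show ?thesis
    using assms by (simp add: g_obj_def f_obj_def rate_scaleR)
qed

lemma f_obj_ray_mono:
  assumes "\<forall>k. 0 < \<omega> k" "0 < \<sigma>2" "1 \<le> u"
  shows "f_obj \<omega> H \<sigma>2 W \<le> f_obj \<omega> H \<sigma>2 (u *\<^sub>R W)"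
proof -
  have "rate H W \<sigma>2 k \<le> rate H W (\<sigma>2 / u\<^sup>2) k" for k
    using assms by (intro rate_antimono) (auto simp: divide_le_eq power_one_right)
  then have "rate H W \<sigma>2 k \<le> rate H (u *\<^sub>R W) \<sigma>2 k" for k
    using assms by (simp add: rate_scaleR)
  then show ?thesis
    unfolding f_obj_def using assms by (intro sum_mono mult_left_mono) (auto simp: less_imp_le)
qed

theorem theorem1:
  fixes \<omega> :: "'k::finite \<Rightarrow> real"
    and H :: "'k \<Rightarrow> complex^'m::finite^'n::finite"
    and \<sigma>2 P :: real
    and V :: "complex^'d::finite^'m^'k"
  assumes "\<forall>k. \<omega> k > 0" and "\<sigma>2 > 0" and "P > 0" and "total_power V > 0"
  shows "stationary_point (g_obj \<omega> H \<sigma>2 P) V \<longleftrightarrow>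
         kkt_point (f_obj \<omega> H \<sigma>2) (\<lambda>W. total_power W - P)
           (sqrt (P / total_power V) *\<^sub>R V)"
  using assms
  by (intro stationary_normalized_iff_kkt total_power_scaleR total_power_differentiable
      g_obj_eq_f_obj_normalized f_obj_differentiable f_obj_ray_mono) auto

end
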